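(* Let $\mathbb{F} = \mathbb{F}_0(\omega)$ be a degree-$2$ extension field of a field $\mathbb{F}_0$. Let $h,d,m,n$ be nonnegative integers satisfying $0 \le h \le d \le n$, and let $A,B \in \mathbb{F}_0^{d \times n}$ and $P \in \mathbb{F}_0^{m \times n}$ be such that $\operatorname{rank}\begin{pmatrix} A+\omega B \\ P \end{pmatrix} = m+d$, $\operatorname{rank}(P) = m$ and $\operatorname{rank}\begin{pmatrix} A \\ B \\ P \end{pmatrix} \le m+2d-h$. Then there exist matrices $A',B' \in \mathbb{F}_0^{d \times n}$ such that $\begin{pmatrix} A+\omega B \\ P \end{pmatrix}$ and $\begin{pmatrix} A'+\omega B' \\ P \end{pmatrix}$ are row-equivalent and $B'$ has $h$ zero rows.
   Context: Here $\begin{pmatrix} X \\ Y \end{pmatrix}$ denotes the matrix obtained by stacking $X$ on top of $Y$. Row-equivalence means one matrix is obtained from the other by elementary row operations (over $\mathbb{F}$). *)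

theory Defs
  imports "Jordan_Normal_Form.Gauss_Jordan_Elimination" "Jordan_Normal_Form.DL_Rank"
begin

definition is_subfield :: "'a::field set \<Rightarrow> bool" where
  "is_subfield K \<longleftrightarrow> 0 \<in> K \<and> 1 \<in> K \<and>
     (\<forall>x\<in>K. \<forall>y\<in>K. x + y \<in> K \<and> x * y \<in> K) \<and>
     (\<forall>x\<in>K. - x \<in> K) \<and> (\<forall>x\<in>K. x \<noteq> 0 \<longrightarrow> inverse x \<in> K)"

text \<open>The whole field type 'a is the degree-2 extension K(w) of the subfield K.\<close>
definition degree2_extension :: "'a::field set \<Rightarrow> 'a \<Rightarrow> bool" where
  "degree2_extension K w \<longleftrightarrow> is_subfield K \<and> w \<notin> K \<and>
     (\<forall>x. \<exists>a\<in>K. \<exists>b\<in>K. x = a + w * b)"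

inductive elem_row_op :: "'a::field mat \<Rightarrow> 'a mat \<Rightarrow> bool" where
  swap: "k < dim_row M \<Longrightarrow> l < dim_row M \<Longrightarrow> elem_row_op M (swaprows k l M)"
| mult: "k < dim_row M \<Longrightarrow> a \<noteq> 0 \<Longrightarrow> elem_row_op M (multrow k a M)"
| add: "k < dim_row M \<Longrightarrow> l < dim_row M \<Longrightarrow> k \<noteq> l \<Longrightarrow> elem_row_op M (addrow a k l M)"

definition row_equivalent :: "'a::field mat \<Rightarrow> 'a mat \<Rightarrow> bool" where
  "row_equivalent M N \<longleftrightarrow> elem_row_op\<^sup>*\<^sup>* M N"

definition mrank :: "'a::field mat \<Rightarrow> nat" where
  "mrank A = vec_space.rank (dim_row A) A"

end

theory Submission
  imports Defs
begin

text \<open>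
  Let \<open>M = [A + \<omega>B; P]\<close> and \<open>N = [A; B; P]\<close>. As long as \<open>B\<close> has fewer than \<open>h\<close> zero rows, the rank
  bound leaves room for a nonzero left-kernel vector \<open>(u, v, t)\<close> of \<open>N\<close> with entries in \<open>F\<^sub>0\<close> whose
  \<open>v\<close>-part vanishes on the zero rows of \<open>B\<close>. Writing \<open>\<omega>\<^sup>2 = c\<^sub>0 + c\<^sub>1\<omega>\<close> and \<open>s = v - c\<^sub>1u\<close>, the
  combination of the rows of \<open>M\<close> with coefficients \<open>(s + \<omega>u, \<omega>t)\<close> equals \<open>sA + c\<^sub>0uB\<close>: a row
  over \<open>F\<^sub>0\<close> in the row space of \<open>N\<close>. Since \<open>M\<close> has independent rows, some row \<open>i\<close> of \<open>B\<close> that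
  is not yet zero has a nonzero coefficient \<open>s\<^sub>i + \<omega>u\<^sub>i\<close>. Replacing row \<open>i\<close> of \<open>M\<close> by the
  combination is a row equivalence that sets row \<open>i\<close> of \<open>A\<close> to \<open>sA + c\<^sub>0uB\<close> and clears row \<open>i\<close> of
  \<open>B\<close>. The new \<open>N\<close> still factors as \<open>C D\<close> through the same \<open>D\<close> with at most \<open>rank N\<close> rows, so the
  argument can be repeated until \<open>h\<close> rows of \<open>B\<close> vanish.
\<close>

lemma sum_lessThan_add:
  fixes a b :: nat
  shows "(\<Sum>q<a + b. f q) = (\<Sum>q<a. f q) + (\<Sum>p<b. f (a + p))"
  by (induction b) (auto simp: add_ac)

lemma index_append_rows:
  assumes "A \<in> carrier_mat nr1 nc" "B \<in> carrier_mat nr2 nc" "i < nr1 + nr2" "j < nc"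
  shows "(A @\<^sub>r B) $$ (i, j) = (if i < nr1 then A $$ (i, j) else B $$ (i - nr1, j))"
  using assms unfolding append_rows_def by auto

lemma carrier_append_rows3:
  "A \<in> carrier_mat d1 n \<Longrightarrow> B \<in> carrier_mat d2 n \<Longrightarrow> P \<in> carrier_mat m n \<Longrightarrow>
    A @\<^sub>r B @\<^sub>r P \<in> carrier_mat (d1 + d2 + m) n"
  by (metis add.assoc carrier_append_rows)

lemma index_append_rows3:
  assumes A: "A \<in> carrier_mat d1 n" and B: "B \<in> carrier_mat d2 n" and P: "P \<in> carrier_mat m n"
    and q: "q < d1 + d2 + m" and j: "j < n"
  shows "(A @\<^sub>r B @\<^sub>r P) $$ (q, j) = (if q < d1 then A $$ (q, j)
    else if q < d1 + d2 then B $$ (q - d1, j) else P $$ (q - d1 - d2, j))"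
  using index_append_rows[OF A carrier_append_rows[OF B P], of q j]
    index_append_rows[OF B P, of "q - d1" j] q j by auto

lemma elements_mat_subsetI:
  "(\<And>i j. i < dim_row M \<Longrightarrow> j < dim_col M \<Longrightarrow> M $$ (i, j) \<in> K) \<Longrightarrow> elements_mat M \<subseteq> K"
  by (blast dest: elements_matD)

lemma elements_mat_subsetD:
  "elements_mat M \<subseteq> K \<Longrightarrow> i < dim_row M \<Longrightarrow> j < dim_col M \<Longrightarrow> M $$ (i, j) \<in> K"
  unfolding elements_mat_def by force

lemma elements_mat_append_rows3:
  assumes A: "A \<in> carrier_mat d1 n" "elements_mat A \<subseteq> K"
    and B: "B \<in> carrier_mat d2 n" "elements_mat B \<subseteq> K"
    and P: "P \<in> carrier_mat m n" "elements_mat P \<subseteq> K"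
  shows "elements_mat (A @\<^sub>r B @\<^sub>r P) \<subseteq> K"
proof (rule elements_mat_subsetI)
  fix q j assume "q < dim_row (A @\<^sub>r B @\<^sub>r P)" "j < dim_col (A @\<^sub>r B @\<^sub>r P)"
  hence qj: "q < d1 + d2 + m" "j < n" using carrier_append_rows3[OF A(1) B(1) P(1)] by auto
  show "(A @\<^sub>r B @\<^sub>r P) $$ (q, j) \<in> K"
    unfolding index_append_rows3[OF A(1) B(1) P(1) qj]
    using qj A B P by (auto intro: elements_mat_subsetD)
qed

definition zero_rows :: "'a::zero mat \<Rightarrow> nat set" where
  "zero_rows M = {i. i < dim_row M \<and> row M i = 0\<^sub>v (dim_col M)}"

lemma zero_rows_iff:
  assumes "M \<in> carrier_mat nr nc"
  shows "i \<in> zero_rows M \<longleftrightarrow> i < nr \<and> (\<forall>j<nc. M $$ (i, j) = 0)"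
  using assms by (auto simp: zero_rows_def vec_eq_iff)

lemma card_zero_rows_clear_row:
  assumes B: "B \<in> carrier_mat d n" and i: "i < d" "i \<notin> zero_rows B"
  shows "card (zero_rows (change_row i (\<lambda>_ _. 0) B)) = Suc (card (zero_rows B))"
proof -
  have B': "change_row i (\<lambda>_ _. 0) B \<in> carrier_mat d n" using B by simp
  have "l \<in> zero_rows (change_row i (\<lambda>_ _. 0) B) \<longleftrightarrow> l \<in> insert i (zero_rows B)" for l
    using B i by (cases "l = i"; cases "l < d") (simp_all add: zero_rows_iff[OF B] zero_rows_iff[OF B'])
  hence "zero_rows (change_row i (\<lambda>_ _. 0) B) = insert i (zero_rows B)" by blast
  moreover have "finite (zero_rows B)" using B by (auto simp: zero_rows_def)
  ultimately show ?thesis using i(2) by simp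
qed

section \<open>Linear combinations of rows\<close>

definition lincomb_rows :: "(nat \<Rightarrow> 'a::comm_ring_1) \<Rightarrow> 'a mat \<Rightarrow> 'a vec" where
  "lincomb_rows c M = vec (dim_col M) (\<lambda>j. \<Sum>i<dim_row M. c i * M $$ (i, j))"

lemma lincomb_rows_dim[simp]: "dim_vec (lincomb_rows c M) = dim_col M"
  and index_lincomb_rows[simp]:
    "j < dim_col M \<Longrightarrow> lincomb_rows c M $ j = (\<Sum>i<dim_row M. c i * M $$ (i, j))"
  unfolding lincomb_rows_def by auto

lemma lincomb_rows_append_rows:
  assumes A: "A \<in> carrier_mat nr1 nc" and B: "B \<in> carrier_mat nr2 nc"
  shows "lincomb_rows c (A @\<^sub>r B) = lincomb_rows c A + lincomb_rows (\<lambda>i. c (nr1 + i)) B"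
proof -
  have AB: "A @\<^sub>r B \<in> carrier_mat (nr1 + nr2) nc" using A B by auto
  show ?thesis
    by (rule eq_vecI) (use A B carrier_matD[OF AB] in \<open>auto simp: sum_lessThan_add index_append_rows intro!: sum.cong\<close>)
qed

lemma lincomb_rows_mult:
  assumes C: "C \<in> carrier_mat r k" and D: "D \<in> carrier_mat k n"
  shows "lincomb_rows c (C * D) = lincomb_rows (\<lambda>l. \<Sum>i<r. c i * C $$ (i, l)) D"
proof (rule eq_vecI)
  fix j assume "j < dim_vec (lincomb_rows (\<lambda>l. \<Sum>i<r. c i * C $$ (i, l)) D)"
  hence j: "j < n" using D by simp
  have "(\<Sum>i<r. c i * (C * D) $$ (i, j)) = (\<Sum>i<r. \<Sum>l<k. c i * (C $$ (i, l) * D $$ (l, j)))"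
    using C D j by (auto simp: scalar_prod_def sum_distrib_left atLeast0LessThan intro!: sum.cong)
  also have "\<dots> = (\<Sum>l<k. (\<Sum>i<r. c i * C $$ (i, l)) * D $$ (l, j))"
    by (subst sum.swap) (simp add: sum_distrib_right mult.assoc)
  finally show "lincomb_rows c (C * D) $ j = lincomb_rows (\<lambda>l. \<Sum>i<r. c i * C $$ (i, l)) D $ j"
    using C D j by simp
qed (use C D in simp)

definition replace_row :: "'a::comm_ring_1 mat \<Rightarrow> nat \<Rightarrow> (nat \<Rightarrow> 'a) \<Rightarrow> 'a mat" where
  "replace_row M i c = change_row i (\<lambda>j _. lincomb_rows c M $ j) M"

lemma replace_row_carrier[simp]: "replace_row M i c \<in> carrier_mat (dim_row M) (dim_col M)"
  and dim_replace_row[simp]: "dim_row (replace_row M i c) = dim_row M" "dim_col (replace_row M i c) = dim_col M"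
  unfolding replace_row_def by auto

lemma index_replace_row:
  "p < dim_row M \<Longrightarrow> j < dim_col M \<Longrightarrow>
    replace_row M i c $$ (p, j) = (if p = i then lincomb_rows c M $ j else M $$ (p, j))"
  unfolding replace_row_def by simp

lemma replace_row_mult:
  assumes C: "C \<in> carrier_mat r k" and D: "D \<in> carrier_mat k n"
  shows "replace_row C i c * D = replace_row (C * D) i c"
proof (rule eq_matI)
  fix p j assume "p < dim_row (replace_row (C * D) i c)" "j < dim_col (replace_row (C * D) i c)"
  hence pj: "p < r" "j < n" using C D by auto
  have row: "row (replace_row C i c) p = (if p = i then lincomb_rows c C else row C p)"
    using C pj by (auto simp: index_replace_row)
  show "(replace_row C i c * D) $$ (p, j) = replace_row (C * D) i c $$ (p, j)"
  proof (cases "p = i")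
    case True
    have "(replace_row C i c * D) $$ (p, j) = lincomb_rows c C \<bullet> col D j"
      using row True C D pj by simp
    also have "\<dots> = lincomb_rows (\<lambda>l. \<Sum>q<r. c q * C $$ (q, l)) D $ j"
      using C D pj by (auto simp: scalar_prod_def atLeast0LessThan intro!: sum.cong)
    also have "\<dots> = lincomb_rows c (C * D) $ j"
      by (simp add: lincomb_rows_mult[OF C D])
    finally show ?thesis
      using True C D pj by (simp add: index_replace_row)
  qed (use row C D pj in \<open>simp add: index_replace_row\<close>)
qed (use C D in auto)

lemma row_equivalent_replace_row:
  assumes M: "M \<in> carrier_mat r n" and i: "i < r" and gi: "g i \<noteq> 0"
  shows "row_equivalent M (replace_row M i g)"
proof -
  define M0 where "M0 = multrow i (g i) M"
  have "elem_row_op M M0"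
    unfolding M0_def using elem_row_op.mult[of i M "g i"] i M gi by auto
  define MS where "MS S = mat r n (\<lambda>(p, j). if p = i
      then g i * M $$ (i, j) + (\<Sum>q\<in>S. g q * M $$ (q, j)) else M $$ (p, j))" for S
  have partial: "elem_row_op\<^sup>*\<^sup>* M0 (MS S)" if "finite S" "S \<subseteq> {..<r} - {i}" for S
    using that
  proof (induction S rule: finite_induct)
    case empty
    have "M0 = MS {}" unfolding M0_def MS_def by (rule eq_matI) (use M in auto)
    thus ?case by simp
  next
    case (insert q S)
    hence q: "q < r" "q \<noteq> i" by auto
    have "elem_row_op (MS S) (addrow (g q) i q (MS S))"
      by (rule elem_row_op.add) (use i q in \<open>auto simp: MS_def\<close>)
    moreover have "addrow (g q) i q (MS S) = MS (insert q S)"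
      by (rule eq_matI) (use insert(1,2) q i in \<open>auto simp: MS_def algebra_simps\<close>)
    ultimately show ?case using insert by (metis rtranclp.rtrancl_into_rtrancl subset_insertI2 insert_subset)
  qed
  have "MS ({..<r} - {i}) = replace_row M i g"
  proof (rule eq_matI)
    fix p j assume "p < dim_row (replace_row M i g)" "j < dim_col (replace_row M i g)"
    hence pj: "p < r" "j < n" using M by auto
    have "(\<Sum>q<r. g q * M $$ (q, j)) = g i * M $$ (i, j) + (\<Sum>q\<in>{..<r} - {i}. g q * M $$ (q, j))"
      by (rule sum.remove) (use i in auto)
    thus "MS ({..<r} - {i}) $$ (p, j) = replace_row M i g $$ (p, j)"
      using pj M by (simp add: MS_def index_replace_row)
  qed (use M in \<open>auto simp: MS_def\<close>)
  with partial[of "{..<r} - {i}"] \<open>elem_row_op M M0\<close> show ?thesis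
    unfolding row_equivalent_def by (auto intro: converse_rtranclp_into_rtranclp)
qed

lemma lincomb_rows_replace_row:
  assumes i: "i < dim_row M"
  shows "lincomb_rows c (replace_row M i g) =
    lincomb_rows (\<lambda>q. (if q = i then 0 else c q) + c i * g q) M"
proof (rule eq_vecI)
  fix j assume "j < dim_vec (lincomb_rows (\<lambda>q. (if q = i then 0 else c q) + c i * g q) M)"
  hence j: "j < dim_col M" by simp
  let ?x = "\<Sum>q<dim_row M. g q * M $$ (q, j)"
  have "(\<Sum>q<dim_row M. c q * replace_row M i g $$ (q, j))
      = (\<Sum>q<dim_row M. (if q = i then 0 else c q * M $$ (q, j)) + (if q = i then c i * ?x else 0))"
    using j by (intro sum.cong) (auto simp: index_replace_row)
  also have "\<dots> = (\<Sum>q<dim_row M. (if q = i then 0 else c q * M $$ (q, j))) + c i * ?x"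
    using i by (simp add: sum.distrib)
  also have "\<dots> = (\<Sum>q<dim_row M. (if q = i then 0 else c q * M $$ (q, j)) + c i * (g q * M $$ (q, j)))"
    by (simp add: sum.distrib sum_distrib_left)
  also have "\<dots> = (\<Sum>q<dim_row M. ((if q = i then 0 else c q) + c i * g q) * M $$ (q, j))"
    by (intro sum.cong) (auto simp: algebra_simps)
  finally show "lincomb_rows c (replace_row M i g) $ j =
      lincomb_rows (\<lambda>q. (if q = i then 0 else c q) + c i * g q) M $ j"
    using j by simp
qed simp

definition lin_indpt_rows :: "'a::comm_ring_1 mat \<Rightarrow> bool" where
  "lin_indpt_rows M \<longleftrightarrow>
    (\<forall>c. lincomb_rows c M = 0\<^sub>v (dim_col M) \<longrightarrow> (\<forall>i<dim_row M. c i = 0))"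

lemma lin_indpt_rows_replace_row:
  fixes M :: "'a::field mat"
  assumes i: "i < dim_row M" and gi: "g i \<noteq> 0" and indep: "lin_indpt_rows M"
  shows "lin_indpt_rows (replace_row M i g)"
  unfolding lin_indpt_rows_def
proof (intro allI impI)
  fix c q
  assume "lincomb_rows c (replace_row M i g) = 0\<^sub>v (dim_col (replace_row M i g))"
    and q: "q < dim_row (replace_row M i g)"
  hence "lincomb_rows (\<lambda>q. (if q = i then 0 else c q) + c i * g q) M = 0\<^sub>v (dim_col M)"
    by (simp add: lincomb_rows_replace_row[OF i])
  hence coeff: "(if p = i then 0 else c p) + c i * g p = 0" if "p < dim_row M" for p
    using indep that unfolding lin_indpt_rows_def by blast
  have "c i = 0" using coeff[OF i] gi by simp
  thus "c q = 0" using coeff[of q] q by (auto split: if_splits)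
qed

section \<open>Rank and left kernels\<close>

lemma exists_nonzero_orthogonal_vec:
  fixes W :: "'a::field vec set"
  assumes W: "W \<subseteq> carrier_vec r" "finite W" "card W < r"
  shows "\<exists>y\<in>carrier_vec r. y \<noteq> 0\<^sub>v r \<and> (\<forall>w\<in>W. w \<bullet> y = 0)"
proof -
  obtain ws where ws: "set ws = W" "distinct ws" using finite_distinct_list[OF W(2)] by blast
  have len: "length ws < r" using ws W(3) distinct_card by fastforce
  define c where "c i = (if i < length ws then ws ! i else 0\<^sub>v r)" for i
  have c: "c \<in> {0..<r} \<rightarrow> carrier_vec r" unfolding c_def using ws W(1) nth_mem by fastforce
  \<comment> \<open>rows: the vectors of \<open>W\<close>, then zero rows; the last row is zero, so \<open>Q\<close> is singular\<close>
  define Q where "Q = mat\<^sub>r r r (\<lambda>i. if i = r - 1 then 0\<^sub>v r else c i)"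
  have Q: "Q \<in> carrier_mat r r" unfolding Q_def by auto
  have "det Q = 0" unfolding Q_def by (rule det_row_0[OF _ c]) (use len in auto)
  then obtain y where y: "y \<in> carrier_vec r" "y \<noteq> 0\<^sub>v r" "Q *\<^sub>v y = 0\<^sub>v r"
    using det_0_iff_vec_prod_zero[OF Q] by blast
  have "w \<bullet> y = 0" if "w \<in> W" for w
  proof -
    obtain p where p: "p < length ws" "w = ws ! p" using \<open>w \<in> W\<close> ws by (metis in_set_conv_nth)
    have "w \<in> carrier_vec r" using p ws W(1) nth_mem by blast
    hence "row Q p = w" unfolding Q_def using p len by (subst row_mat_of_row_fun) (auto simp: c_def)
    moreover have "(Q *\<^sub>v y) $ p = row Q p \<bullet> y" using p len Q by auto
    ultimately show "w \<bullet> y = 0" using y p len by auto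
  qed
  thus ?thesis using y by blast
qed

lemma exists_maximal_lin_indpt_cols:
  fixes X :: "'a::field mat"
  assumes X: "X \<in> carrier_mat r n"
  defines "V \<equiv> module_vec TYPE('a) r"
  shows "\<exists>U. finite U \<and> U \<subseteq> set (cols X) \<and> LinearCombinations.module.lin_indpt class_ring V U
     \<and> card U = mrank X \<and> set (cols X) \<subseteq> LinearCombinations.module.span class_ring V U"
proof -
  interpret vec_space "TYPE('a)" r .
  let ?P = "\<lambda>T. T \<subseteq> set (cols X) \<and> lin_indpt T"
  obtain U where U: "finite U" "maximal U ?P"
    using maximal_exists_superset[of "set (cols X)" ?P "{}"] by (auto simp: lin_dep_def)
  have rank: "mrank X = card U" unfolding mrank_def using rank_card_indpt[OF _ U(2)] X by auto
  have indep: "U \<subseteq> set (cols X)" "lin_indpt U" using U(2) unfolding maximal_def by auto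
  have cols: "set (cols X) \<subseteq> carrier_vec r" using X cols_dim by blast
  have "s \<in> span U" if s: "s \<in> set (cols X)" for s
  proof (cases "s \<in> U")
    case True thus ?thesis using in_own_span[of U] indep cols by auto
  next
    case False
    hence "\<not> ?P (insert s U)" using U(2) unfolding maximal_def by blast
    hence "lin_dep (insert s U)" using indep s by auto
    thus ?thesis using lin_dep_iff_in_span[of U s] indep cols s False by auto
  qed
  thus ?thesis using U indep rank unfolding V_def by auto
qed

lemma rank_factorization:
  fixes X :: "'a::field mat"
  assumes X: "X \<in> carrier_mat r n"
  shows "\<exists>k C D. k \<le> mrank X \<and> C \<in> carrier_mat r k \<and> D \<in> carrier_mat k n \<and> X = C * D"
proof -
  interpret vec_space "TYPE('a)" r .
  obtain U where U: "finite U" "U \<subseteq> set (cols X)" "card U = mrank X" "set (cols X) \<subseteq> span U"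
    using exists_maximal_lin_indpt_cols[OF X] by blast
  obtain us where us: "set us = U" "distinct us" using finite_distinct_list[OF U(1)] by blast
  have us_carrier: "set us \<subseteq> carrier_vec r" using us U(2) X cols_dim by blast
  define k where "k = length us"
  define C where "C = mat_of_cols r us"
  have C: "C \<in> carrier_mat r k" unfolding C_def k_def by auto
  have "\<exists>f. f \<in> carrier_vec k \<and> col X j = C *\<^sub>v f" if j: "j < n" for j
  proof -
    have "col X j \<in> set (cols X)" using j X by (auto simp: cols_def)
    hence "col X j \<in> span_list us" using U(4) us span_list_as_span[OF us_carrier] by auto
    then obtain a where "col X j = lincomb_list a us" by (metis in_span_listE)
    also have "\<dots> = C *\<^sub>v vec k a"
      unfolding C_def k_def by (rule lincomb_list_as_mat_mult) (use us_carrier in auto)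
    finally show ?thesis by (intro exI[of _ "vec k a"]) simp
  qed
  then obtain f where f: "\<And>j. j < n \<Longrightarrow> f j \<in> carrier_vec k \<and> col X j = C *\<^sub>v f j" by metis
  define D where "D = mat k n (\<lambda>(l, j). f j $ l)"
  have D: "D \<in> carrier_mat k n" unfolding D_def by auto
  have "X = C * D"
  proof (rule eq_matI)
    fix i j assume "i < dim_row (C * D)" "j < dim_col (C * D)"
    hence ij: "i < r" "j < n" using C D by auto
    have "col D j = f j" using f[OF ij(2)] ij unfolding D_def by auto
    hence "(C * D) $$ (i, j) = (C *\<^sub>v f j) $ i" using ij C D by auto
    also have "\<dots> = col X j $ i" using f[OF ij(2)] by simp
    also have "\<dots> = X $$ (i, j)" using ij X by simp
    finally show "X $$ (i, j) = (C * D) $$ (i, j)" by simp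
  qed (use X C D in auto)
  moreover have "k = mrank X" using us U(3) distinct_card unfolding k_def by fastforce
  ultimately show ?thesis using C D by blast
qed

lemma full_rank_lin_indpt_rows:
  fixes X :: "'a::field mat"
  assumes X: "X \<in> carrier_mat r n" and rank: "mrank X = r"
  shows "lin_indpt_rows X"
  unfolding lin_indpt_rows_def
proof (intro allI impI)
  interpret vec_space "TYPE('a)" r .
  fix c i assume comb: "lincomb_rows c X = 0\<^sub>v (dim_col X)" and i: "i < dim_row X"
  obtain U where U: "finite U" "U \<subseteq> set (cols X)" "lin_indpt U" "card U = mrank X"
    using exists_maximal_lin_indpt_cols[OF X] by blast
  have U_carrier: "U \<subseteq> carrier_vec r" using U X cols_dim by blast
  have "basis U" by (rule dim_li_is_basis) (use U U_carrier rank in \<open>auto simp: dim_is_n\<close>)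
  hence span: "span U = carrier_vec r" unfolding basis_def by auto
  define y where "y = vec r c"
  have "y \<in> orthogonal_complement U"
    unfolding orthogonal_complement_def
  proof (intro CollectI conjI ballI)
    fix u assume "u \<in> U"
    then obtain j where j: "j < n" "u = col X j" using U(2) X by (auto simp: cols_def)
    have "y \<bullet> u = lincomb_rows c X $ j"
      using X j by (auto simp: y_def scalar_prod_def atLeast0LessThan mult.commute intro!: sum.cong)
    thus "y \<bullet> u = 0" using comb j X by simp
  qed (simp add: y_def)
  hence "y \<in> orthogonal_complement (span U)"
    using in_orthogonal_complement_span[OF U_carrier] by simp
  moreover have "unit_vec r i \<in> span U" unfolding span using i X by auto
  ultimately have "y \<bullet> unit_vec r i = 0" unfolding orthogonal_complement_def by auto
  thus "c i = 0" using i X by (simp add: y_def)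
qed

lemma exists_nonzero_left_kernel_vector:
  fixes C D :: "'a::field mat"
  assumes C: "C \<in> carrier_mat r k" and D: "D \<in> carrier_mat k n"
    and S: "S \<subseteq> {..<r}" "k + card S < r"
  shows "\<exists>c. (\<exists>i<r. c i \<noteq> 0) \<and> lincomb_rows c (C * D) = 0\<^sub>v n \<and> (\<forall>i\<in>S. c i = 0)"
proof -
  define W where "W = set (cols C) \<union> unit_vec r ` S"
  have "set (cols C) \<subseteq> carrier_vec r" using C cols_dim by blast
  hence W_carrier: "W \<subseteq> carrier_vec r" unfolding W_def using S(1) by auto
  have finite: "finite S" using S(1) finite_subset by blast
  have "card W \<le> card (set (cols C)) + card (unit_vec r ` S :: 'a vec set)"
    unfolding W_def by (rule card_Un_le)
  also have "\<dots> \<le> k + card S"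
    using card_length[of "cols C"] card_image_le[OF finite] C by (intro add_mono) auto
  finally obtain y where y: "y \<in> carrier_vec r" "y \<noteq> 0\<^sub>v r" "\<forall>w\<in>W. w \<bullet> y = 0"
    using exists_nonzero_orthogonal_vec[OF W_carrier] W_def finite S(2) by auto
  have "\<exists>i<r. y $ i \<noteq> 0" using y(1,2) by (auto simp: vec_eq_iff)
  moreover have "lincomb_rows (\<lambda>i. y $ i) (C * D) = 0\<^sub>v n"
  proof -
    have "(\<Sum>i<r. y $ i * C $$ (i, l)) = col C l \<bullet> y" if "l < k" for l
      using C y(1) that by (auto simp: scalar_prod_def atLeast0LessThan mult.commute intro!: sum.cong)
    moreover have "col C l \<bullet> y = 0" if "l < k" for l
      using y(3) C that unfolding W_def by (auto simp: cols_def)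
    ultimately show ?thesis
      unfolding lincomb_rows_mult[OF C D] using D by (intro eq_vecI) auto
  qed
  moreover have "y $ i = 0" if "i \<in> S" for i
  proof -
    have "unit_vec r i \<bullet> y = 0" using y(3) that unfolding W_def by auto
    thus ?thesis using y(1) S(1) that by auto
  qed
  ultimately show ?thesis by blast
qed

section \<open>The elimination identities\<close>

text \<open>If \<open>\<omega>\<^sup>2 = c\<^sub>0 + c\<^sub>1\<omega>\<close>, the \<open>\<omega>\<close>-part of this combination of the rows of \<open>[A + \<omega>B; P]\<close> is \<open>\<omega>\<close>
  times the kernel relation, so the combination lies in the row space of \<open>[A; B; P]\<close>.\<close>
lemma lincomb_rows_twisted_kernel:
  fixes A B P :: "'a::field mat"
  assumes A: "A \<in> carrier_mat d n" and B: "B \<in> carrier_mat d n" and P: "P \<in> carrier_mat m n"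
    and ww: "w * w = c0 + w * c1"
    and ker: "lincomb_rows u A + (lincomb_rows v B + lincomb_rows t P) = 0\<^sub>v n"
  shows "lincomb_rows (\<lambda>q. if q < d then v q - c1 * u q + w * u q else w * t (q - d)) ((A + w \<cdot>\<^sub>m B) @\<^sub>r P)
    = lincomb_rows (\<lambda>q. if q < d then v q - c1 * u q else if q < d + d then c0 * u (q - d) else 0)
        (A @\<^sub>r B @\<^sub>r P)"
    (is "lincomb_rows ?\<gamma> ?M = lincomb_rows ?\<sigma> ?N")
proof -
  have AwB: "A + w \<cdot>\<^sub>m B \<in> carrier_mat d n" and BP: "B @\<^sub>r P \<in> carrier_mat (d + m) n"
    using A B P by auto
  have M: "?M \<in> carrier_mat (d + m) n" using AwB P by simp
  have N: "?N \<in> carrier_mat (d + d + m) n" using A B P by (rule carrier_append_rows3)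
  have entry: "(v l - c1 * u l + w * u l) * (a + w * b)
      = ((v l - c1 * u l) * a + c0 * (u l * b)) + w * (u l * a + v l * b)" for l a b
  proof -
    have "(v l - c1 * u l + w * u l) * (a + w * b) - (((v l - c1 * u l) * a + c0 * (u l * b)) + w * (u l * a + v l * b))
        = u l * b * (w * w - c0 - w * c1)" by (simp add: algebra_simps)
    thus ?thesis using ww by simp
  qed
  show ?thesis
  proof (rule eq_vecI)
    fix j assume "j < dim_vec (lincomb_rows ?\<sigma> ?N)"
    hence j: "j < n" using N by simp
    have "lincomb_rows ?\<gamma> ?M $ j
        = (\<Sum>l<d. (v l - c1 * u l + w * u l) * (A $$ (l, j) + w * B $$ (l, j))) + w * (\<Sum>p<m. t p * P $$ (p, j))"
      using A B P j by (simp add: lincomb_rows_append_rows[OF AwB P] sum_distrib_left mult.assoc)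
    also have "\<dots> = (\<Sum>l<d. ((v l - c1 * u l) * A $$ (l, j) + c0 * (u l * B $$ (l, j)))
        + w * (u l * A $$ (l, j) + v l * B $$ (l, j))) + w * (\<Sum>p<m. t p * P $$ (p, j))"
      by (simp only: entry)
    also have "\<dots> = (\<Sum>l<d. (v l - c1 * u l) * A $$ (l, j) + c0 * (u l * B $$ (l, j)))
        + w * ((\<Sum>l<d. u l * A $$ (l, j)) + ((\<Sum>l<d. v l * B $$ (l, j)) + (\<Sum>p<m. t p * P $$ (p, j))))"
      by (simp add: sum.distrib sum_distrib_left distrib_left add.assoc)
    also have "(\<Sum>l<d. u l * A $$ (l, j)) + ((\<Sum>l<d. v l * B $$ (l, j)) + (\<Sum>p<m. t p * P $$ (p, j))) = 0"
      using arg_cong[OF ker, of "\<lambda>x. x $ j"] A B P j by simp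
    also have "(\<Sum>l<d. (v l - c1 * u l) * A $$ (l, j) + c0 * (u l * B $$ (l, j))) + w * 0
        = lincomb_rows ?\<sigma> ?N $ j"
      using A B P j
      by (simp add: lincomb_rows_append_rows[OF A BP] lincomb_rows_append_rows[OF B P]
          sum.distrib sum_distrib_left mult.assoc)
    finally show "lincomb_rows ?\<gamma> ?M $ j = lincomb_rows ?\<sigma> ?N $ j" .
  qed (use M N in simp)
qed

lemma replace_row_pencil:
  fixes A B P :: "'a::comm_ring_1 mat" and w :: 'a and g :: "nat \<Rightarrow> 'a"
  assumes A: "A \<in> carrier_mat d n" and B: "B \<in> carrier_mat d n" and P: "P \<in> carrier_mat m n"
    and i: "i < d"
  defines "x \<equiv> lincomb_rows g ((A + w \<cdot>\<^sub>m B) @\<^sub>r P)"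
  shows "(change_row i (\<lambda>j _. x $ j) A + w \<cdot>\<^sub>m change_row i (\<lambda>_ _. 0) B) @\<^sub>r P
    = replace_row ((A + w \<cdot>\<^sub>m B) @\<^sub>r P) i g"
proof -
  let ?A' = "change_row i (\<lambda>j _. x $ j) A" and ?B' = "change_row i (\<lambda>_ _. 0) B"
  have AwB: "A + w \<cdot>\<^sub>m B \<in> carrier_mat d n" and A'wB': "?A' + w \<cdot>\<^sub>m ?B' \<in> carrier_mat d n"
    using A B by auto
  have M: "(A + w \<cdot>\<^sub>m B) @\<^sub>r P \<in> carrier_mat (d + m) n"
    and M': "(?A' + w \<cdot>\<^sub>m ?B') @\<^sub>r P \<in> carrier_mat (d + m) n"
    using AwB A'wB' P by auto
  show ?thesis
  proof (rule eq_matI)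
    fix p j assume "p < dim_row (replace_row ((A + w \<cdot>\<^sub>m B) @\<^sub>r P) i g)"
      "j < dim_col (replace_row ((A + w \<cdot>\<^sub>m B) @\<^sub>r P) i g)"
    hence pj: "p < d + m" "j < n" using M by auto
    have "((?A' + w \<cdot>\<^sub>m ?B') @\<^sub>r P) $$ (p, j)
        = (if p = i then x $ j else ((A + w \<cdot>\<^sub>m B) @\<^sub>r P) $$ (p, j))"
      using A B i pj by (simp add: index_append_rows[OF A'wB' P pj] index_append_rows[OF AwB P pj])
    thus "((?A' + w \<cdot>\<^sub>m ?B') @\<^sub>r P) $$ (p, j) = replace_row ((A + w \<cdot>\<^sub>m B) @\<^sub>r P) i g $$ (p, j)"
      using M pj by (simp add: index_replace_row x_def)
  qed (use M M' in auto)
qed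

lemma replace_rows_factorization:
  fixes \<sigma> :: "nat \<Rightarrow> 'a::comm_ring_1"
  assumes A: "A \<in> carrier_mat d n" and B: "B \<in> carrier_mat d n" and P: "P \<in> carrier_mat m n"
    and C: "C \<in> carrier_mat (d + d + m) k" and D: "D \<in> carrier_mat k n"
    and factor: "A @\<^sub>r B @\<^sub>r P = C * D" and i: "i < d"
  defines "x \<equiv> lincomb_rows \<sigma> (A @\<^sub>r B @\<^sub>r P)"
  shows "change_row i (\<lambda>j _. x $ j) A @\<^sub>r change_row i (\<lambda>_ _. 0) B @\<^sub>r P
    = replace_row (replace_row C i \<sigma>) (d + i) (\<lambda>_. 0) * D"
proof -
  let ?N = "A @\<^sub>r B @\<^sub>r P"
  let ?A' = "change_row i (\<lambda>j _. x $ j) A" and ?B' = "change_row i (\<lambda>_ _. 0) B"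
  have N: "?N \<in> carrier_mat (d + d + m) n" using A B P by (rule carrier_append_rows3)
  have A': "?A' \<in> carrier_mat d n" and B': "?B' \<in> carrier_mat d n" using A B by auto
  have N': "?A' @\<^sub>r ?B' @\<^sub>r P \<in> carrier_mat (d + d + m) n" using A' B' P by (rule carrier_append_rows3)
  have "replace_row (replace_row C i \<sigma>) (d + i) (\<lambda>_. 0) * D
      = replace_row (replace_row ?N i \<sigma>) (d + i) (\<lambda>_. 0)"
  proof -
    have "replace_row C i \<sigma> \<in> carrier_mat (d + d + m) k" using C replace_row_carrier[of C] by auto
    thus ?thesis by (simp add: replace_row_mult[OF _ D] replace_row_mult[OF C D] factor)
  qed
  also have "\<dots> = ?A' @\<^sub>r ?B' @\<^sub>r P"
  proof (rule eq_matI)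
    fix q j assume "q < dim_row (?A' @\<^sub>r ?B' @\<^sub>r P)" "j < dim_col (?A' @\<^sub>r ?B' @\<^sub>r P)"
    hence qj: "q < d + d + m" "j < n" using N' by auto
    have "replace_row (replace_row ?N i \<sigma>) (d + i) (\<lambda>_. 0) $$ (q, j)
        = (if q = d + i then 0 else if q = i then x $ j else ?N $$ (q, j))"
      using N qj by (simp add: index_replace_row x_def)
    also have "\<dots> = (?A' @\<^sub>r ?B' @\<^sub>r P) $$ (q, j)"
      unfolding index_append_rows3[OF A B P qj] index_append_rows3[OF A' B' P qj]
      using A B i qj by auto
    finally show "replace_row (replace_row ?N i \<sigma>) (d + i) (\<lambda>_. 0) $$ (q, j) = (?A' @\<^sub>r ?B' @\<^sub>r P) $$ (q, j)" .
  qed (use N N' in auto)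
  finally show ?thesis by simp
qed

section \<open>Quadratic extensions\<close>

locale quadratic_extension =
  fixes K :: "'a::field set" and w :: 'a
  assumes degree2: "degree2_extension K w"
begin

lemma subfield_closed[simp]:
  "0 \<in> K" "1 \<in> K"
  "x \<in> K \<Longrightarrow> y \<in> K \<Longrightarrow> x + y \<in> K" "x \<in> K \<Longrightarrow> y \<in> K \<Longrightarrow> x * y \<in> K"
  "x \<in> K \<Longrightarrow> - x \<in> K"
  using degree2 unfolding degree2_extension_def is_subfield_def by auto

lemma subfield_diff[simp]: "x \<in> K \<Longrightarrow> y \<in> K \<Longrightarrow> x - y \<in> K"
  using subfield_closed(3)[of x "- y"] subfield_closed(5)[of y] by simp

lemma subfield_sum[simp]: "(\<And>x. x \<in> S \<Longrightarrow> f x \<in> K) \<Longrightarrow> sum f S \<in> K"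
  by (induction S rule: infinite_finite_induct) auto

lemma exists_coordinates: "\<exists>a\<in>K. \<exists>b\<in>K. x = a + w * b"
  using degree2 unfolding degree2_extension_def by auto

lemma coordinates_eq_0:
  assumes "a \<in> K" "b \<in> K" "a + w * b = 0"
  shows "a = 0 \<and> b = 0"
proof (cases "b = 0")
  case False
  hence "w = - a * inverse b" using assms(3) by (simp add: field_simps eq_neg_iff_add_eq_0)
  moreover have "- a * inverse b \<in> K"
    using assms(1,2) False degree2 unfolding degree2_extension_def is_subfield_def by simp
  moreover have "w \<notin> K" using degree2 unfolding degree2_extension_def by simp
  ultimately show ?thesis by simp
qed (use assms in simp)

lemma lincomb_rows_in_subfield:
  assumes "\<forall>i<dim_row M. c i \<in> K" "elements_mat M \<subseteq> K" "j < dim_col M"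
  shows "lincomb_rows c M $ j \<in> K"
  using assms by (auto intro!: subfield_sum subfield_closed(4) elements_mat_subsetD)

lemma subfield_left_kernel_vector:
  assumes M: "elements_mat M \<subseteq> K" and comb: "lincomb_rows c M = 0\<^sub>v (dim_col M)" and ci: "c i \<noteq> 0"
  shows "\<exists>c'. (\<forall>q. c' q \<in> K) \<and> c' i \<noteq> 0 \<and> lincomb_rows c' M = 0\<^sub>v (dim_col M) \<and> (\<forall>q. c q = 0 \<longrightarrow> c' q = 0)"
proof -
  obtain re im where coords: "\<And>x. re x \<in> K \<and> im x \<in> K \<and> x = re x + w * im x"
    using exists_coordinates by metis
  have re: "re x \<in> K" and im: "im x \<in> K" for x
    using coords by blast+
  have decomp: "re x + w * im x = x" for x
    using coords[of x] by (elim conjE) (rule sym)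
  let ?a = "\<lambda>q. re (c q)" and ?b = "\<lambda>q. im (c q)"
  have coords_mult: "x * y = re x * y + w * (im x * y)" for x y
  proof -
    have "re x * y + w * (im x * y) = (re x + w * im x) * y" by (simp add: algebra_simps)
    thus ?thesis by (simp only: decomp)
  qed
  have "lincomb_rows ?a M $ j = 0 \<and> lincomb_rows ?b M $ j = 0" if j: "j < dim_col M" for j
  proof (rule coordinates_eq_0)
    have "lincomb_rows c M $ j = (\<Sum>q<dim_row M. re (c q) * M $$ (q, j) + w * (im (c q) * M $$ (q, j)))"
      unfolding index_lincomb_rows[OF j] by (intro sum.cong refl) (rule coords_mult)
    also have "\<dots> = lincomb_rows ?a M $ j + w * lincomb_rows ?b M $ j"
      using j by (simp add: sum.distrib sum_distrib_left)
    finally show "lincomb_rows ?a M $ j + w * lincomb_rows ?b M $ j = 0" using comb j by simp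
    show "lincomb_rows ?a M $ j \<in> K" by (rule lincomb_rows_in_subfield[OF _ M j]) (simp add: re)
    show "lincomb_rows ?b M $ j \<in> K" by (rule lincomb_rows_in_subfield[OF _ M j]) (simp add: im)
  qed
  hence kernel: "lincomb_rows ?a M = 0\<^sub>v (dim_col M)" "lincomb_rows ?b M = 0\<^sub>v (dim_col M)"
    by (auto intro!: eq_vecI)
  have zeros: "?a q = 0 \<and> ?b q = 0" if "c q = 0" for q
    by (rule coordinates_eq_0[OF re im]) (simp only: decomp that)
  have "?a i \<noteq> 0 \<or> ?b i \<noteq> 0"
  proof (rule ccontr)
    assume "\<not> ?thesis"
    hence "re (c i) + w * im (c i) = 0" by simp
    with ci show False by (simp add: decomp)
  qed
  thus ?thesis
  proof
    assume "?a i \<noteq> 0"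
    thus ?thesis using re kernel(1) zeros by (intro exI[of _ ?a]) simp
  next
    assume "?b i \<noteq> 0"
    thus ?thesis using im kernel(2) zeros by (intro exI[of _ ?b]) simp
  qed
qed

lemma exists_subfield_left_kernel_vector:
  assumes C: "C \<in> carrier_mat r k" and D: "D \<in> carrier_mat k n" and CD: "elements_mat (C * D) \<subseteq> K"
    and S: "S \<subseteq> {..<r}" "k + card S < r"
  shows "\<exists>c. (\<forall>q. c q \<in> K) \<and> (\<exists>i<r. c i \<noteq> 0) \<and> lincomb_rows c (C * D) = 0\<^sub>v n \<and> (\<forall>i\<in>S. c i = 0)"
proof -
  obtain c i where c: "i < r" "c i \<noteq> 0" "lincomb_rows c (C * D) = 0\<^sub>v n" "\<forall>i\<in>S. c i = 0"
    using exists_nonzero_left_kernel_vector[OF C D S] by blast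
  moreover obtain c' where "\<forall>q. c' q \<in> K" "c' i \<noteq> 0" "lincomb_rows c' (C * D) = 0\<^sub>v n"
      "\<forall>q. c q = 0 \<longrightarrow> c' q = 0"
    using subfield_left_kernel_vector[OF CD, of c i] c D by auto
  ultimately show ?thesis by blast
qed

lemma exists_stacked_kernel_vector:
  assumes A: "A \<in> carrier_mat d n" "elements_mat A \<subseteq> K"
    and B: "B \<in> carrier_mat d n" "elements_mat B \<subseteq> K"
    and P: "P \<in> carrier_mat m n" "elements_mat P \<subseteq> K"
    and C: "C \<in> carrier_mat (d + d + m) k" and D: "D \<in> carrier_mat k n"
    and factor: "A @\<^sub>r B @\<^sub>r P = C * D"
    and small: "k + card (zero_rows B) < d + d + m"
  obtains u v t where "\<And>l. l < d \<Longrightarrow> u l \<in> K" "\<And>l. l < d \<Longrightarrow> v l \<in> K"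
    "lincomb_rows u A + (lincomb_rows v B + lincomb_rows t P) = 0\<^sub>v n"
    "\<And>l. l \<in> zero_rows B \<Longrightarrow> v l = 0"
    "(\<exists>l<d. u l \<noteq> 0 \<or> v l \<noteq> 0) \<or> (\<exists>p<m. t p \<noteq> 0)"
proof -
  let ?S = "(+) d ` zero_rows B"
  have CD: "elements_mat (C * D) \<subseteq> K"
    using elements_mat_append_rows3[OF A B P] by (simp add: factor)
  have S: "?S \<subseteq> {..<d + d + m}" using B(1) by (auto simp: zero_rows_def)
  have "card ?S = card (zero_rows B)" by (simp add: card_image)
  then obtain Y where Y: "\<And>q. Y q \<in> K" "\<exists>q<d + d + m. Y q \<noteq> 0"
      "lincomb_rows Y (C * D) = 0\<^sub>v n" "\<forall>q\<in>?S. Y q = 0"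
    using exists_subfield_left_kernel_vector[OF C D CD S] small by auto
  show ?thesis
  proof (rule that[of Y "\<lambda>l. Y (d + l)" "\<lambda>p. Y (d + (d + p))"])
    show "lincomb_rows Y A + (lincomb_rows (\<lambda>l. Y (d + l)) B + lincomb_rows (\<lambda>p. Y (d + (d + p))) P) = 0\<^sub>v n"
      using Y(3) unfolding factor[symmetric]
      by (simp add: lincomb_rows_append_rows[OF A(1) carrier_append_rows[OF B(1) P(1)]]
          lincomb_rows_append_rows[OF B(1) P(1)])
    obtain q where q: "q < d + d + m" "Y q \<noteq> 0" using Y(2) by blast
    show "(\<exists>l<d. Y l \<noteq> 0 \<or> Y (d + l) \<noteq> 0) \<or> (\<exists>p<m. Y (d + (d + p)) \<noteq> 0)"
    proof -
      consider "q < d" | "d \<le> q" "q < d + d" | "d + d \<le> q" using q by linarith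
      thus ?thesis
      proof cases
        case 1 thus ?thesis using q by blast
      next
        case 2 thus ?thesis using q by (intro disjI1 exI[of _ "q - d"]) auto
      next
        case 3 thus ?thesis using q by (intro disjI2 exI[of _ "q - d - d"]) auto
      qed
    qed
  qed (use Y in auto)
qed

lemma exists_eliminable_row:
  assumes A: "A \<in> carrier_mat d n" and B: "B \<in> carrier_mat d n" and P: "P \<in> carrier_mat m n"
    and indep: "lin_indpt_rows ((A + w \<cdot>\<^sub>m B) @\<^sub>r P)"
    and uv: "\<And>l. l < d \<Longrightarrow> u l \<in> K" "\<And>l. l < d \<Longrightarrow> v l \<in> K" and c1: "c1 \<in> K"
    and ker: "lincomb_rows u A + (lincomb_rows v B + lincomb_rows t P) = 0\<^sub>v n"
    and v_zero: "\<And>l. l \<in> zero_rows B \<Longrightarrow> v l = 0"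
    and nonzero: "(\<exists>l<d. u l \<noteq> 0 \<or> v l \<noteq> 0) \<or> (\<exists>p<m. t p \<noteq> 0)"
  shows "\<exists>i<d. i \<notin> zero_rows B \<and> v i - c1 * u i + w * u i \<noteq> 0"
proof (rule ccontr)
  assume no_pivot: "\<not> ?thesis"
  have off_zero_rows: "u l = 0 \<and> v l = 0" if l: "l < d" "l \<notin> zero_rows B" for l
  proof -
    have "v l - c1 * u l = 0 \<and> u l = 0"
      by (rule coordinates_eq_0) (use l no_pivot uv c1 in auto)
    thus ?thesis by simp
  qed
  have v0: "v l = 0" if "l < d" for l
    using off_zero_rows[OF that] v_zero by blast
  have uB: "u l * B $$ (l, j) = 0" if "l < d" "j < n" for l j
    using off_zero_rows[of l] zero_rows_iff[OF B, of l] that by (cases "l \<in> zero_rows B") simp_all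
  let ?y = "\<lambda>q. if q < d then u q else t (q - d)"
  have AwB: "A + w \<cdot>\<^sub>m B \<in> carrier_mat d n" using A B by simp
  have M: "(A + w \<cdot>\<^sub>m B) @\<^sub>r P \<in> carrier_mat (d + m) n" using AwB P by simp
  have "lincomb_rows ?y ((A + w \<cdot>\<^sub>m B) @\<^sub>r P) = 0\<^sub>v n"
  proof (rule eq_vecI)
    fix j assume "j < dim_vec (0\<^sub>v n :: 'a vec)"
    hence j: "j < n" by simp
    have "lincomb_rows ?y ((A + w \<cdot>\<^sub>m B) @\<^sub>r P) $ j
        = (\<Sum>l<d. u l * A $$ (l, j)) + w * (\<Sum>l<d. u l * B $$ (l, j)) + (\<Sum>p<m. t p * P $$ (p, j))"
      using A B P j by (simp add: lincomb_rows_append_rows[OF AwB P] sum.distrib sum_distrib_left algebra_simps)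
    also have "(\<Sum>l<d. u l * B $$ (l, j)) = 0" using uB j by (intro sum.neutral) simp
    also have "(\<Sum>l<d. u l * A $$ (l, j)) + w * 0 + (\<Sum>p<m. t p * P $$ (p, j)) = 0"
      using arg_cong[OF ker, of "\<lambda>x. x $ j"] A B P j v0 by simp
    finally show "lincomb_rows ?y ((A + w \<cdot>\<^sub>m B) @\<^sub>r P) $ j = 0\<^sub>v n $ j" using j by simp
  qed (use M in simp)
  hence y0: "?y q = 0" if "q < d + m" for q
    using indep[unfolded lin_indpt_rows_def, rule_format, of ?y q] M that by simp
  have "u l = 0" if "l < d" for l
    using y0[of l] that by simp
  moreover have "t p = 0" if "p < m" for p
    using y0[of "d + p"] that by simp
  ultimately show False
    using nonzero v0 by auto
qed

lemma clear_pencil_row: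
  assumes A: "A \<in> carrier_mat d n" "elements_mat A \<subseteq> K"
    and B: "B \<in> carrier_mat d n" "elements_mat B \<subseteq> K"
    and P: "P \<in> carrier_mat m n" "elements_mat P \<subseteq> K"
    and indep: "lin_indpt_rows ((A + w \<cdot>\<^sub>m B) @\<^sub>r P)"
    and C: "C \<in> carrier_mat (d + d + m) k" and D: "D \<in> carrier_mat k n"
    and factor: "A @\<^sub>r B @\<^sub>r P = C * D"
    and i: "i < d" "i \<notin> zero_rows B" and \<gamma>i: "\<gamma> i \<noteq> 0"
    and \<sigma>: "\<And>q. q < d + d + m \<Longrightarrow> \<sigma> q \<in> K"
    and comb: "lincomb_rows \<gamma> ((A + w \<cdot>\<^sub>m B) @\<^sub>r P) = lincomb_rows \<sigma> (A @\<^sub>r B @\<^sub>r P)"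
  obtains A' B' C' where "A' \<in> carrier_mat d n" "elements_mat A' \<subseteq> K"
    "B' \<in> carrier_mat d n" "elements_mat B' \<subseteq> K"
    "lin_indpt_rows ((A' + w \<cdot>\<^sub>m B') @\<^sub>r P)"
    "C' \<in> carrier_mat (d + d + m) k" "A' @\<^sub>r B' @\<^sub>r P = C' * D"
    "row_equivalent ((A + w \<cdot>\<^sub>m B) @\<^sub>r P) ((A' + w \<cdot>\<^sub>m B') @\<^sub>r P)"
    "card (zero_rows B') = Suc (card (zero_rows B))"
proof -
  let ?M = "(A + w \<cdot>\<^sub>m B) @\<^sub>r P" and ?N = "A @\<^sub>r B @\<^sub>r P"
  have M: "?M \<in> carrier_mat (d + m) n" using A(1) B(1) P(1) by simp
  have N: "?N \<in> carrier_mat (d + d + m) n" using A(1) B(1) P(1) by (rule carrier_append_rows3)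
  define x where "x = lincomb_rows \<sigma> ?N"
  have x_K: "x $ j \<in> K" if "j < n" for j
    unfolding x_def
    by (rule lincomb_rows_in_subfield) (use N \<sigma> that elements_mat_append_rows3[OF A B P] in simp_all)
  define A' where "A' = change_row i (\<lambda>j _. x $ j) A"
  define B' where "B' = change_row i (\<lambda>_ _. 0) B"
  have A': "A' \<in> carrier_mat d n" and B': "B' \<in> carrier_mat d n"
    unfolding A'_def B'_def using A(1) B(1) by simp_all
  have M': "(A' + w \<cdot>\<^sub>m B') @\<^sub>r P = replace_row ?M i \<gamma>"
    unfolding A'_def B'_def x_def comb[symmetric] by (rule replace_row_pencil[OF A(1) B(1) P(1) i(1)])
  show ?thesis
  proof (rule that[OF A' _ B' _ _ _ _ _ card_zero_rows_clear_row[OF B(1) i, folded B'_def]])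
    show "elements_mat A' \<subseteq> K"
      by (rule elements_mat_subsetI) (use A A' x_K in \<open>auto simp: A'_def intro: elements_mat_subsetD\<close>)
    show "elements_mat B' \<subseteq> K"
      by (rule elements_mat_subsetI) (use B B' in \<open>auto simp: B'_def intro: elements_mat_subsetD\<close>)
    show "lin_indpt_rows ((A' + w \<cdot>\<^sub>m B') @\<^sub>r P)"
      unfolding M' by (rule lin_indpt_rows_replace_row[where i = i and g = \<gamma>]) (use M i \<gamma>i indep in simp_all)
    show "row_equivalent ?M ((A' + w \<cdot>\<^sub>m B') @\<^sub>r P)"
      unfolding M' using i by (intro row_equivalent_replace_row[where g = \<gamma>, OF M _ \<gamma>i]) simp
    show "replace_row (replace_row C i \<sigma>) (d + i) (\<lambda>_. 0) \<in> carrier_mat (d + d + m) k"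
      using C replace_row_carrier[of "replace_row C i \<sigma>"] by simp
    show "A' @\<^sub>r B' @\<^sub>r P = replace_row (replace_row C i \<sigma>) (d + i) (\<lambda>_. 0) * D"
      unfolding A'_def B'_def x_def by (rule replace_rows_factorization[OF A(1) B(1) P(1) C D factor i(1)])
  qed
qed

lemma reduction_step:
  assumes A: "A \<in> carrier_mat d n" "elements_mat A \<subseteq> K"
    and B: "B \<in> carrier_mat d n" "elements_mat B \<subseteq> K"
    and P: "P \<in> carrier_mat m n" "elements_mat P \<subseteq> K"
    and indep: "lin_indpt_rows ((A + w \<cdot>\<^sub>m B) @\<^sub>r P)"
    and C: "C \<in> carrier_mat (d + d + m) k" and D: "D \<in> carrier_mat k n"
    and factor: "A @\<^sub>r B @\<^sub>r P = C * D"
    and small: "k + card (zero_rows B) < d + d + m"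
  obtains A' B' C' where "A' \<in> carrier_mat d n" "elements_mat A' \<subseteq> K"
    "B' \<in> carrier_mat d n" "elements_mat B' \<subseteq> K"
    "lin_indpt_rows ((A' + w \<cdot>\<^sub>m B') @\<^sub>r P)"
    "C' \<in> carrier_mat (d + d + m) k" "A' @\<^sub>r B' @\<^sub>r P = C' * D"
    "row_equivalent ((A + w \<cdot>\<^sub>m B) @\<^sub>r P) ((A' + w \<cdot>\<^sub>m B') @\<^sub>r P)"
    "card (zero_rows B') = Suc (card (zero_rows B))"
proof -
  obtain u v t where uv: "\<And>l. l < d \<Longrightarrow> u l \<in> K" "\<And>l. l < d \<Longrightarrow> v l \<in> K"
    and ker: "lincomb_rows u A + (lincomb_rows v B + lincomb_rows t P) = 0\<^sub>v n"
    and v_zero: "\<And>l. l \<in> zero_rows B \<Longrightarrow> v l = 0"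
    and nonzero: "(\<exists>l<d. u l \<noteq> 0 \<or> v l \<noteq> 0) \<or> (\<exists>p<m. t p \<noteq> 0)"
    using exists_stacked_kernel_vector[OF A B P C D factor small] by blast
  obtain c0 c1 where c: "c0 \<in> K" "c1 \<in> K" and ww: "w * w = c0 + w * c1"
    using exists_coordinates[of "w * w"] by blast
  obtain i where i: "i < d" "i \<notin> zero_rows B" "v i - c1 * u i + w * u i \<noteq> 0"
    using exists_eliminable_row[OF A(1) B(1) P(1) indep uv c(2) ker v_zero nonzero] by blast
  let ?\<gamma> = "\<lambda>q. if q < d then v q - c1 * u q + w * u q else w * t (q - d)"
  let ?\<sigma> = "\<lambda>q. if q < d then v q - c1 * u q else if q < d + d then c0 * u (q - d) else 0"
  have "?\<sigma> q \<in> K" if "q < d + d + m" for q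
    using that uv c by auto
  with i show ?thesis
    using clear_pencil_row[OF A B P indep C D factor, of i ?\<gamma> ?\<sigma>] that
      lincomb_rows_twisted_kernel[OF A(1) B(1) P(1) ww ker] by auto
qed

lemma row_equivalent_with_zero_rows:
  assumes P: "P \<in> carrier_mat m n" "elements_mat P \<subseteq> K" and D: "D \<in> carrier_mat k n"
  shows "A \<in> carrier_mat d n \<Longrightarrow> elements_mat A \<subseteq> K \<Longrightarrow> B \<in> carrier_mat d n \<Longrightarrow> elements_mat B \<subseteq> K \<Longrightarrow>
    lin_indpt_rows ((A + w \<cdot>\<^sub>m B) @\<^sub>r P) \<Longrightarrow> C \<in> carrier_mat (d + d + m) k \<Longrightarrow> A @\<^sub>r B @\<^sub>r P = C * D \<Longrightarrow>
    k + h \<le> d + d + m \<Longrightarrow>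
    \<exists>A' B'. A' \<in> carrier_mat d n \<and> elements_mat A' \<subseteq> K \<and> B' \<in> carrier_mat d n \<and> elements_mat B' \<subseteq> K \<and>
      row_equivalent ((A + w \<cdot>\<^sub>m B) @\<^sub>r P) ((A' + w \<cdot>\<^sub>m B') @\<^sub>r P) \<and> h \<le> card (zero_rows B')"
proof (induction "h - card (zero_rows B)" arbitrary: A B C rule: less_induct)
  case less
  show ?case
  proof (cases "h \<le> card (zero_rows B)")
    case True
    thus ?thesis using less.prems(1-4) unfolding row_equivalent_def by blast
  next
    case False
    hence "k + card (zero_rows B) < d + d + m" using less.prems(8) by linarith
    then obtain A1 B1 C1 where step: "A1 \<in> carrier_mat d n" "elements_mat A1 \<subseteq> K"
        "B1 \<in> carrier_mat d n" "elements_mat B1 \<subseteq> K" "lin_indpt_rows ((A1 + w \<cdot>\<^sub>m B1) @\<^sub>r P)"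
        "C1 \<in> carrier_mat (d + d + m) k" "A1 @\<^sub>r B1 @\<^sub>r P = C1 * D"
        "row_equivalent ((A + w \<cdot>\<^sub>m B) @\<^sub>r P) ((A1 + w \<cdot>\<^sub>m B1) @\<^sub>r P)"
        "card (zero_rows B1) = Suc (card (zero_rows B))"
      using reduction_step[OF less.prems(1-4) P less.prems(5,6) D less.prems(7)] by metis
    have "h - card (zero_rows B1) < h - card (zero_rows B)" using False step(9) by linarith
    from less.hyps[OF this step(1-7) less.prems(8)] obtain A' B' where
      "A' \<in> carrier_mat d n" "elements_mat A' \<subseteq> K" "B' \<in> carrier_mat d n" "elements_mat B' \<subseteq> K"
      "row_equivalent ((A1 + w \<cdot>\<^sub>m B1) @\<^sub>r P) ((A' + w \<cdot>\<^sub>m B') @\<^sub>r P)" "h \<le> card (zero_rows B')"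
      by blast
    with step(8) show ?thesis unfolding row_equivalent_def by (meson rtranclp_trans)
  qed
qed

end

theorem lemma3p4:
  fixes K :: "'a::field set" and w :: 'a
    and h d m n :: nat
    and A B P :: "'a mat"
  assumes ext: "degree2_extension K w"
    and hd: "h \<le> d" and dn: "d \<le> n"
    and A: "A \<in> carrier_mat d n" "elements_mat A \<subseteq> K"
    and B: "B \<in> carrier_mat d n" "elements_mat B \<subseteq> K"
    and P: "P \<in> carrier_mat m n" "elements_mat P \<subseteq> K"
    and r1: "mrank ((A + w \<cdot>\<^sub>m B) @\<^sub>r P) = m + d"
    and r2: "mrank P = m"
    and r3: "mrank (A @\<^sub>r B @\<^sub>r P) \<le> m + 2 * d - h"
  shows "\<exists>A' B'. A' \<in> carrier_mat d n \<and> elements_mat A' \<subseteq> K \<and>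
                B' \<in> carrier_mat d n \<and> elements_mat B' \<subseteq> K \<and>
                row_equivalent ((A + w \<cdot>\<^sub>m B) @\<^sub>r P) ((A' + w \<cdot>\<^sub>m B') @\<^sub>r P) \<and>
                card {i. i < d \<and> row B' i = 0\<^sub>v n} \<ge> h"
proof -
  interpret quadratic_extension K w by unfold_locales (rule ext)
  have "(A + w \<cdot>\<^sub>m B) @\<^sub>r P \<in> carrier_mat (d + m) n" using A(1) B(1) P(1) by simp
  hence indep: "lin_indpt_rows ((A + w \<cdot>\<^sub>m B) @\<^sub>r P)"
    by (rule full_rank_lin_indpt_rows) (simp add: r1)
  obtain k C D where k: "k \<le> mrank (A @\<^sub>r B @\<^sub>r P)" and C: "C \<in> carrier_mat (d + d + m) k"
    and D: "D \<in> carrier_mat k n" and factor: "A @\<^sub>r B @\<^sub>r P = C * D"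
    using rank_factorization[OF carrier_append_rows3[OF A(1) B(1) P(1)]] by blast
  have "k + h \<le> d + d + m" using k r3 hd by linarith
  then obtain A' B' where "A' \<in> carrier_mat d n" "elements_mat A' \<subseteq> K"
      "B' \<in> carrier_mat d n" "elements_mat B' \<subseteq> K"
      "row_equivalent ((A + w \<cdot>\<^sub>m B) @\<^sub>r P) ((A' + w \<cdot>\<^sub>m B') @\<^sub>r P)" "h \<le> card (zero_rows B')"
    using row_equivalent_with_zero_rows[OF P D A B indep C factor] by blast
  thus ?thesis unfolding zero_rows_def by auto
qed

end
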